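(* Let $f:\mathbb{R}^n\to\mathbb{R}$ be convex and $L$-smooth for some $L>0$, and suppose $f$ has a minimizer $x^\star\in\mathbb{R}^n$. Let $\{x^k\}$ be generated by APBM with models $\hat f^k$ satisfying, for every $k\ge1$: (a) $\hat f^k$ is convex; (b) $\hat f^k(x)\ge f(y^k)+\langle\nabla f(y^k),x-y^k\rangle$ for all $x\in\mathbb{R}^n$; (c) $\hat f^k(x)\le f(x)$ for all $x\in\mathbb{R}^n$. Then for every $k\ge0$, $$f(x^k)-f(x^\star)\le\frac{2L\|x^0-x^\star\|^2}{(k+1)^2}.$$
   Context: APBM (accelerated proximal bundle method) for minimizing $f$: given $L>0$ and an initial point $x^0\in\mathbb{R}^n$, set $y^1=x^0$ and $t_1=1$. For $k=1,2,\dots$, given a model $\hat f^k:\mathbb{R}^n\to\mathbb{R}$, set $x^k=\arg\min_{x\in\mathbb{R}^n}\ \hat f^k(x)+\frac{L}{2}\|x-y^k\|^2$, $t_{k+1}=\frac{1+\sqrt{1+4t_k^2}}{2}$, $y^{k+1}=x^k+\frac{t_k-1}{t_{k+1}}(x^k-x^{k-1})$. A differentiable $f$ is $L$-smooth if $\|\nabla f(x)-\nabla f(y)\|\le L\|x-y\|$ for all $x,y\in\mathbb{R}^n$ (Euclidean norm). *)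

theory Defs
  imports "HOL-Analysis.Analysis"
begin

end

theory Submission
  imports Defs
begin

text \<open>
  The model conditions make each APBM step satisfy the three-point inequality
  \<open>f x\<^sub>k + L/2 \<parallel>z - x\<^sub>k\<parallel>\<^sup>2 \<le> f z + L/2 \<parallel>z - y\<^sub>k\<parallel>\<^sup>2\<close> of an exact proximal-gradient
  step: the lower model bound together with the descent lemma bounds \<open>f x\<^sub>k\<close> by the model,
  and minimality of \<open>x\<^sub>k\<close> for the strongly convex prox objective supplies the extra
  \<open>L/2 \<parallel>z - x\<^sub>k\<parallel>\<^sup>2\<close>. From this inequality alone the Beck--Teboulle argument applies:
  choosing \<open>z\<close> as a suitable convex combination of \<open>x\<^sub>k\<close> and \<open>x\<^sup>\<star>\<close> shows that the energy
  \<open>t\<^sub>k\<^sup>2 (f x\<^sub>k - f x\<^sup>\<star>) + L/2 \<parallel>t\<^sub>k x\<^sub>k - (t\<^sub>k - 1) x\<^sub>k\<^sub>-\<^sub>1 - x\<^sup>\<star>\<parallel>\<^sup>2\<close> never increases,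
  and \<open>t\<^sub>k \<ge> (k + 1)/2\<close>.
\<close>

lemma quadratic_upper_bound_of_lipschitz_gradient:
  fixes f :: "'a::real_inner \<Rightarrow> real" and g :: "'a \<Rightarrow> 'a"
  assumes der: "\<And>z. (f has_derivative (\<lambda>h. g z \<bullet> h)) (at z)"
    and lip: "\<And>u v. norm (g u - g v) \<le> L * norm (u - v)"
  shows "f v \<le> f u + g u \<bullet> (v - u) + L / 2 * (norm (v - u))\<^sup>2"
proof -
  define d where "d = v - u"
  define \<psi> where "\<psi> s = f (u + s *\<^sub>R d) - s * (g u \<bullet> d) - L / 2 * s\<^sup>2 * (norm d)\<^sup>2" for s :: real
  have \<psi>_deriv: "DERIV \<psi> s :> (g (u + s *\<^sub>R d) - g u) \<bullet> d - L * s * (norm d)\<^sup>2" for s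
  proof -
    have "((\<lambda>s::real. u + s *\<^sub>R d) has_derivative (\<lambda>h. h *\<^sub>R d)) (at s)"
      by (auto intro!: derivative_eq_intros)
    from has_derivative_compose[OF this der]
    have "((\<lambda>s. f (u + s *\<^sub>R d)) has_real_derivative g (u + s *\<^sub>R d) \<bullet> d) (at s)"
      unfolding has_field_derivative_def
      by (rule has_derivative_eq_rhs) (auto simp: fun_eq_iff o_def)
    then show ?thesis
      unfolding \<psi>_def by (auto intro!: derivative_eq_intros simp: power2_eq_square inner_diff_left)
  qed
  have "\<psi> 1 \<le> \<psi> 0"
  proof (rule DERIV_nonpos_imp_nonincreasing[of 0 1])
    fix s :: real
    assume s: "0 \<le> s" "s \<le> 1"
    have "(g (u + s *\<^sub>R d) - g u) \<bullet> d \<le> norm (g (u + s *\<^sub>R d) - g u) * norm d"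
      by (rule norm_cauchy_schwarz)
    also have "\<dots> \<le> L * norm (s *\<^sub>R d) * norm d"
      using lip[of "u + s *\<^sub>R d" u] by (simp add: mult_right_mono)
    also have "\<dots> = L * s * (norm d)\<^sup>2"
      using s by (simp add: power2_eq_square)
    finally show "\<exists>D. DERIV \<psi> s :> D \<and> D \<le> 0"
      using \<psi>_deriv by fastforce
  qed simp
  then show ?thesis
    unfolding \<psi>_def d_def by simp
qed

lemma gradient_zero_at_minimizer:
  fixes f :: "'a::real_inner \<Rightarrow> real"
  assumes "(f has_derivative (\<lambda>h. g \<bullet> h)) (at x)" and "\<And>z. f x \<le> f z"
  shows "g = 0"
proof -
  have "(\<lambda>h. g \<bullet> h) = (\<lambda>h. 0)"
    using assms by (intro differential_zero_maxmin[of x UNIV]) auto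
  then have "g \<bullet> g = 0"
    by meson
  then show ?thesis
    by simp
qed

lemma norm_add_square:
  fixes a b :: "'a::real_inner"
  shows "(norm (a + b))\<^sup>2 = (norm a)\<^sup>2 + 2 * (a \<bullet> b) + (norm b)\<^sup>2"
  by (simp add: power2_norm_eq_inner inner_add_left inner_add_right inner_commute)

lemma prox_three_point_inequality:
  fixes h :: "'a::real_inner \<Rightarrow> real"
  assumes h_convex: "convex_on UNIV h"
    and prox: "\<And>z. h x + L / 2 * (norm (x - y))\<^sup>2 \<le> h z + L / 2 * (norm (z - y))\<^sup>2"
  shows "h x + L / 2 * (norm (x - y))\<^sup>2 + L / 2 * (norm (z - x))\<^sup>2
      \<le> h z + L / 2 * (norm (z - y))\<^sup>2"
proof -
  define A where "A = h z - h x + L * ((x - y) \<bullet> (z - x))"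
  define B where "B = L / 2 * (norm (z - x))\<^sup>2"
  have "0 \<le> A + s * B" if s: "0 < s" "s < 1" for s
  proof -
    define zs where "zs = (1 - s) *\<^sub>R x + s *\<^sub>R z"
    have convex_combination: "h zs \<le> (1 - s) * h x + s * h z"
      unfolding zs_def using convex_onD[OF h_convex] s by simp
    have norm_zs: "(norm (zs - y))\<^sup>2 = (norm (x - y))\<^sup>2 + 2 * s * ((x - y) \<bullet> (z - x)) + s\<^sup>2 * (norm (z - x))\<^sup>2"
    proof -
      have "zs - y = (x - y) + s *\<^sub>R (z - x)"
        unfolding zs_def by (simp add: algebra_simps)
      then show ?thesis
        by (simp only: norm_add_square) (simp add: power_mult_distrib)
    qed
    have "0 \<le> s * (A + s * B)"
      using prox[of zs] convex_combination unfolding norm_zs A_def B_def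
      by (simp add: algebra_simps power2_eq_square)
    then show ?thesis
      using s by (simp add: zero_le_mult_iff)
  qed
  then have A_nonneg: "0 \<le> A"
    by (intro tendsto_lowerbound[of "\<lambda>s. A + s * B" _ "at_right 0"])
      (auto intro!: tendsto_eq_intros eventually_mono[OF eventually_at_right_real[of 0 1]])
  have norm_zy: "(norm (z - y))\<^sup>2 = (norm (z - x))\<^sup>2 + 2 * ((x - y) \<bullet> (z - x)) + (norm (x - y))\<^sup>2"
    using norm_add_square[of "z - x" "x - y"] by (simp add: inner_commute)
  have "L / 2 * (norm (z - y))\<^sup>2
      = L / 2 * (norm (z - x))\<^sup>2 + L * ((x - y) \<bullet> (z - x)) + L / 2 * (norm (x - y))\<^sup>2"
    unfolding norm_zy by (simp add: algebra_simps)
  with A_nonneg show ?thesis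
    unfolding A_def by linarith
qed

lemma model_step_three_point_inequality:
  fixes f h :: "'a::real_inner \<Rightarrow> real" and g :: "'a \<Rightarrow> 'a"
  assumes der: "\<And>z. (f has_derivative (\<lambda>v. g z \<bullet> v)) (at z)"
    and lip: "\<And>u v. norm (g u - g v) \<le> L * norm (u - v)"
    and h_convex: "convex_on UNIV h"
    and h_lower: "\<And>z. f y + g y \<bullet> (z - y) \<le> h z"
    and h_upper: "\<And>z. h z \<le> f z"
    and prox: "\<And>z. h x + L / 2 * (norm (x - y))\<^sup>2 \<le> h z + L / 2 * (norm (z - y))\<^sup>2"
  shows "f x + L / 2 * (norm (z - x))\<^sup>2 \<le> f z + L / 2 * (norm (z - y))\<^sup>2"
proof -
  have "f x \<le> f y + g y \<bullet> (x - y) + L / 2 * (norm (x - y))\<^sup>2"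
    by (rule quadratic_upper_bound_of_lipschitz_gradient[OF der lip])
  also have "\<dots> \<le> h x + L / 2 * (norm (x - y))\<^sup>2"
    using h_lower[of x] by simp
  finally show ?thesis
    using prox_three_point_inequality[OF h_convex prox, of z] h_upper[of z] by linarith
qed

lemma momentum_lower_bound:
  fixes t :: "nat \<Rightarrow> real"
  assumes t1: "t 1 = 1"
    and t_step: "\<And>k. k \<ge> 1 \<Longrightarrow> t (k + 1) = (1 + sqrt (1 + 4 * (t k)\<^sup>2)) / 2"
    and "k \<ge> 1"
  shows "(real k + 1) / 2 \<le> t k"
  using \<open>k \<ge> 1\<close>
proof (induction k rule: dec_induct)
  case base
  then show ?case
    using t1 by simp
next
  case (step m)
  have "2 * t m = sqrt ((2 * t m)\<^sup>2)"
    using step.IH by (simp only: real_sqrt_abs) simp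
  also have "\<dots> \<le> sqrt (1 + 4 * (t m)\<^sup>2)"
    by (intro real_sqrt_le_mono) (simp add: power_mult_distrib)
  finally show ?case
    using t_step[OF step.hyps(1)] step.IH by simp
qed

lemma momentum_square_identity:
  fixes s t :: real
  assumes "t = (1 + sqrt (1 + 4 * s\<^sup>2)) / 2"
  shows "t\<^sup>2 - t = s\<^sup>2"
proof -
  have "2 * t - 1 = sqrt (1 + 4 * s\<^sup>2)"
    using assms by simp
  then have "(2 * t - 1)\<^sup>2 = 1 + 4 * s\<^sup>2"
    by simp
  then show ?thesis
    by (simp add: power2_eq_square algebra_simps)
qed

definition apbm_energy ::
    "('a::real_normed_vector \<Rightarrow> real) \<Rightarrow> real \<Rightarrow> (nat \<Rightarrow> real) \<Rightarrow> (nat \<Rightarrow> 'a) \<Rightarrow> 'a \<Rightarrow> nat \<Rightarrow> real"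
  where "apbm_energy f L t x u k =
    (t k)\<^sup>2 * (f (x k) - f u) + L / 2 * (norm (t k *\<^sub>R x k - (t k - 1) *\<^sub>R x (k - 1) - u))\<^sup>2"

lemma apbm_energy_step:
  fixes f :: "'a::real_inner \<Rightarrow> real"
  assumes f_convex: "convex_on UNIV f"
    and three_point: "\<And>z. f (x (k + 1)) + L / 2 * (norm (z - x (k + 1)))\<^sup>2 \<le> f z + L / 2 * (norm (z - y (k + 1)))\<^sup>2"
    and y_step: "y (k + 1) = x k + ((t k - 1) / t (k + 1)) *\<^sub>R (x k - x (k - 1))"
    and t_ge: "1 \<le> t (k + 1)"
    and t_square: "(t (k + 1))\<^sup>2 - t (k + 1) = (t k)\<^sup>2"
  shows "apbm_energy f L t x u (k + 1) \<le> apbm_energy f L t x u k"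
proof -
  define \<tau> where "\<tau> = t (k + 1)"
  define N where "N j = t j *\<^sub>R x j - (t j - 1) *\<^sub>R x (j - 1) - u" for j
  \<comment> \<open>chosen so that \<open>\<tau> (z - x\<^sub>k\<^sub>+\<^sub>1)\<close> and \<open>\<tau> (z - y\<^sub>k\<^sub>+\<^sub>1)\<close> are, up to sign, the vectors in the two energies\<close>
  define z where "z = (1 - 1 / \<tau>) *\<^sub>R x k + (1 / \<tau>) *\<^sub>R u"
  have \<tau>_ge: "1 \<le> \<tau>" and \<tau>_square: "\<tau>\<^sup>2 - \<tau> = (t k)\<^sup>2"
    using t_ge t_square unfolding \<tau>_def by simp_all
  have scaled_norm: "\<tau>\<^sup>2 * (norm v)\<^sup>2 = (norm w)\<^sup>2" if "\<tau> *\<^sub>R v = - w" for v w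
    using that by (metis norm_minus_cancel norm_scaleR power_mult_distrib power2_abs)
  have \<tau>_z: "\<tau> *\<^sub>R z = (\<tau> - 1) *\<^sub>R x k + u"
    unfolding z_def using \<tau>_ge by (simp add: algebra_simps)
  have "\<tau> *\<^sub>R (z - x (k + 1)) = - N (k + 1)"
    unfolding N_def \<tau>_def[symmetric] using \<tau>_z by (simp add: algebra_simps)
  then have norm_next: "\<tau>\<^sup>2 * (norm (z - x (k + 1)))\<^sup>2 = (norm (N (k + 1)))\<^sup>2"
    by (rule scaled_norm)
  have "\<tau> *\<^sub>R y (k + 1) = \<tau> *\<^sub>R x k + (t k - 1) *\<^sub>R (x k - x (k - 1))"
    unfolding y_step \<tau>_def[symmetric] using \<tau>_ge by (simp only: scaleR_add_right scaleR_scaleR) simp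
  then have "\<tau> *\<^sub>R (z - y (k + 1)) = - N k"
    unfolding scaleR_diff_right \<tau>_z N_def by (simp add: algebra_simps)
  then have norm_prev: "\<tau>\<^sup>2 * (norm (z - y (k + 1)))\<^sup>2 = (norm (N k))\<^sup>2"
    by (rule scaled_norm)
  have "f z \<le> (1 - 1 / \<tau>) * f (x k) + (1 / \<tau>) * f u"
    unfolding z_def using convex_onD[OF f_convex, of "1 / \<tau>"] \<tau>_ge by simp
  then have "f (x (k + 1)) + L / 2 * (norm (z - x (k + 1)))\<^sup>2
      \<le> (1 - 1 / \<tau>) * f (x k) + (1 / \<tau>) * f u + L / 2 * (norm (z - y (k + 1)))\<^sup>2"
    using three_point[of z] by linarith
  then have "\<tau>\<^sup>2 * (f (x (k + 1)) + L / 2 * (norm (z - x (k + 1)))\<^sup>2)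
      \<le> \<tau>\<^sup>2 * ((1 - 1 / \<tau>) * f (x k) + (1 / \<tau>) * f u + L / 2 * (norm (z - y (k + 1)))\<^sup>2)"
    by (rule mult_left_mono) simp
  then have "\<tau>\<^sup>2 * f (x (k + 1)) + L / 2 * (\<tau>\<^sup>2 * (norm (z - x (k + 1)))\<^sup>2)
      \<le> (\<tau>\<^sup>2 - \<tau>) * f (x k) + \<tau> * f u + L / 2 * (\<tau>\<^sup>2 * (norm (z - y (k + 1)))\<^sup>2)"
    using \<tau>_ge by (simp add: algebra_simps power2_eq_square)
  then have "\<tau>\<^sup>2 * f (x (k + 1)) + L / 2 * (norm (N (k + 1)))\<^sup>2
      \<le> (t k)\<^sup>2 * f (x k) + \<tau> * f u + L / 2 * (norm (N k))\<^sup>2"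
    unfolding norm_next norm_prev \<tau>_square .
  moreover have "apbm_energy f L t x u (k + 1) = \<tau>\<^sup>2 * (f (x (k + 1)) - f u) + L / 2 * (norm (N (k + 1)))\<^sup>2"
    unfolding apbm_energy_def N_def \<tau>_def by simp
  moreover have "apbm_energy f L t x u k = (t k)\<^sup>2 * (f (x k) - f u) + L / 2 * (norm (N k))\<^sup>2"
    unfolding apbm_energy_def N_def by simp
  ultimately show ?thesis
    using \<tau>_square by (simp add: algebra_simps)
qed

lemma apbm_energy_first:
  assumes "t 1 = 1" and "y 1 = x 0"
    and "f (x 1) + L / 2 * (norm (u - x 1))\<^sup>2 \<le> f u + L / 2 * (norm (u - y 1))\<^sup>2"
  shows "apbm_energy f L t x u 1 \<le> L / 2 * (norm (x 0 - u))\<^sup>2"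
  using assms by (simp add: apbm_energy_def norm_minus_commute)

lemma apbm_convergence_rate:
  fixes f :: "'a::real_inner \<Rightarrow> real"
  assumes L_nonneg: "0 \<le> L"
    and f_convex: "convex_on UNIV f"
    and y1: "y 1 = x 0"
    and t1: "t 1 = 1"
    and t_step: "\<And>k. k \<ge> 1 \<Longrightarrow> t (k + 1) = (1 + sqrt (1 + 4 * (t k)\<^sup>2)) / 2"
    and y_step: "\<And>k. k \<ge> 1 \<Longrightarrow> y (k + 1) = x k + ((t k - 1) / t (k + 1)) *\<^sub>R (x k - x (k - 1))"
    and three_point: "\<And>k z. k \<ge> 1 \<Longrightarrow> f (x k) + L / 2 * (norm (z - x k))\<^sup>2 \<le> f z + L / 2 * (norm (z - y k))\<^sup>2"
    and k: "k \<ge> 1"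
  shows "f (x k) - f u \<le> 2 * L * (norm (x 0 - u))\<^sup>2 / (real k + 1)\<^sup>2"
proof -
  define R where "R = (norm (x 0 - u))\<^sup>2"
  have t_lower: "(real j + 1) / 2 \<le> t j" if "j \<ge> 1" for j
    using momentum_lower_bound[OF t1 t_step that] .
  have "apbm_energy f L t x u k \<le> L / 2 * R"
    using k
  proof (induction k rule: dec_induct)
    case base
    have "f (x 1) + L / 2 * (norm (u - x 1))\<^sup>2 \<le> f u + L / 2 * (norm (u - y 1))\<^sup>2"
      using three_point[of 1 u] by simp
    from apbm_energy_first[where t = t and y = y and x = x, OF t1 y1 this] show ?case
      unfolding R_def by simp
  next
    case (step j)
    have "1 \<le> t (j + 1)"
      using t_lower[of "j + 1"] by simp
    moreover have "(t (j + 1))\<^sup>2 - t (j + 1) = (t j)\<^sup>2"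
      by (rule momentum_square_identity[OF t_step[OF step.hyps(1)]])
    ultimately have "apbm_energy f L t x u (j + 1) \<le> apbm_energy f L t x u j"
      by (rule apbm_energy_step[where x = x and y = y and t = t and k = j,
            OF f_convex three_point[OF le_add2] y_step[OF step.hyps(1)]])
    then show ?case
      using step.IH by simp
  qed
  moreover have "0 \<le> L / 2 * (norm (t k *\<^sub>R x k - (t k - 1) *\<^sub>R x (k - 1) - u))\<^sup>2"
    using L_nonneg by simp
  ultimately have energy_bound: "(t k)\<^sup>2 * (f (x k) - f u) \<le> L / 2 * R"
    unfolding apbm_energy_def by linarith
  show ?thesis
  proof (cases "f (x k) - f u \<le> 0")
    case True
    moreover have "0 \<le> 2 * L * (norm (x 0 - u))\<^sup>2 / (real k + 1)\<^sup>2"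
      using L_nonneg by simp
    ultimately show ?thesis
      by linarith
  next
    case False
    have "((real k + 1) / 2)\<^sup>2 \<le> (t k)\<^sup>2"
      using t_lower[OF k] by (intro power_mono) auto
    from mult_right_mono[OF this, of "f (x k) - f u"]
    have "((real k + 1) / 2)\<^sup>2 * (f (x k) - f u) \<le> L / 2 * R"
      using False energy_bound by linarith
    then have "(real k + 1)\<^sup>2 * (f (x k) - f u) \<le> 2 * L * R"
      by (simp add: power_divide field_simps)
    then show ?thesis
      unfolding R_def by (simp add: field_simps)
  qed
qed

theorem corollary1:
  fixes f :: "'a::euclidean_space \<Rightarrow> real"
    and gradf :: "'a \<Rightarrow> 'a"
    and L :: real
    and xstar :: "'a"
    and fhat :: "nat \<Rightarrow> 'a \<Rightarrow> real"
    and x y :: "nat \<Rightarrow> 'a"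
    and t :: "nat \<Rightarrow> real"
  assumes L_pos: "L > 0"
    and f_convex: "convex_on UNIV f"
    and f_grad: "\<And>z. (f has_derivative (\<lambda>h. gradf z \<bullet> h)) (at z)"
    and f_smooth: "\<And>u v. norm (gradf u - gradf v) \<le> L * norm (u - v)"
    and xstar_min: "\<And>z. f xstar \<le> f z"
    and y1: "y 1 = x 0"
    and t1: "t 1 = 1"
    and x_step: "\<And>k z. k \<ge> 1 \<Longrightarrow>
        fhat k (x k) + L / 2 * (norm (x k - y k))\<^sup>2 \<le> fhat k z + L / 2 * (norm (z - y k))\<^sup>2"
    and t_step: "\<And>k. k \<ge> 1 \<Longrightarrow> t (k + 1) = (1 + sqrt (1 + 4 * (t k)\<^sup>2)) / 2"
    and y_step: "\<And>k. k \<ge> 1 \<Longrightarrow>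
        y (k + 1) = x k + ((t k - 1) / t (k + 1)) *\<^sub>R (x k - x (k - 1))"
    and model_convex: "\<And>k. k \<ge> 1 \<Longrightarrow> convex_on UNIV (fhat k)"
    and model_lower: "\<And>k z. k \<ge> 1 \<Longrightarrow> fhat k z \<ge> f (y k) + gradf (y k) \<bullet> (z - y k)"
    and model_upper: "\<And>k z. k \<ge> 1 \<Longrightarrow> fhat k z \<le> f z"
  shows "\<forall>k. f (x k) - f xstar \<le> 2 * L * (norm (x 0 - xstar))\<^sup>2 / (real k + 1)\<^sup>2"
proof
  fix k
  have three_point: "f (x j) + L / 2 * (norm (z - x j))\<^sup>2 \<le> f z + L / 2 * (norm (z - y j))\<^sup>2"
    if "j \<ge> 1" for j z
    using model_step_three_point_inequality[OF f_grad f_smooth model_convex model_lower model_upper x_step]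
      that by blast
  show "f (x k) - f xstar \<le> 2 * L * (norm (x 0 - xstar))\<^sup>2 / (real k + 1)\<^sup>2"
  proof (cases "k = 0")
    case True
    \<comment> \<open>\<open>x 0\<close> is not a prox point, so here only smoothness and \<open>\<nabla>f x\<^sup>\<star> = 0\<close> help\<close>
    have "gradf xstar = 0"
      using gradient_zero_at_minimizer[OF f_grad xstar_min] .
    then have "f (x 0) \<le> f xstar + L / 2 * (norm (x 0 - xstar))\<^sup>2"
      using quadratic_upper_bound_of_lipschitz_gradient[OF f_grad f_smooth, of "x 0" xstar] by simp
    moreover have "0 \<le> L * (norm (x 0 - xstar))\<^sup>2"
      using L_pos by simp
    ultimately show ?thesis
      using True by simp
  next
    case False
    then show ?thesis
      using apbm_convergence_rate[OF _ f_convex y1 t1 t_step y_step three_point] L_pos by simp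
  qed
qed

end
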